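(* For every definable relation $R(\bar x,\bar y)$, with $\bar x$ of length $k$ and $\bar y=(y_1,\dots,y_l)$, there is a natural number $K$ such that for every $\bar a\in\mathcal M^k$ the following are equivalent: (1) $R(\bar a,\bar b)$ holds for some linearly independent tuple $\bar b\in\mathcal M^l$ with $\mathcal V(\bar a)\cap\mathcal V(\bar b)=\{\vec 0\}$; (2) $R(\bar a,\bar b)$ holds for every linearly independent tuple $\bar b\in\mathcal M^l$ with $\mathcal V(\bar a)\cap\mathcal V(\bar b)=\{\vec 0\}$; (3) $(\exists_{>K}\bar y)R(\bar a,\bar y)$.
   Context: $\mathcal M$ denotes the $\mathbb Q$-vector space $\mathbb Q^{<\omega}$ of all sequences of rationals with only finitely many nonzero terms, with zero vector $\vec 0$, regarded as the structure $\langle\mathcal M;+\rangle$. A relation on $\mathcal M$ is definable if it is first-order definable without parameters in $\langle\mathcal M;+\rangle$. $\mathcal V(\bar a)$ denotes the $\mathbb Q$-linear span of the entries of $\bar a$. The quantifier $(\exists_{>K}y)Q(y)$ means "there are at least $K+1$ pairwise distinct $y$ with $Q(y)$"; for tuples, $(\exists_{>K}y_1,\dots,y_l)Q(\bar y):=(\exists_{>K}y_1)(\exists_{>K}y_2,\dots,y_l)Q(\bar y)$. *)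

theory Defs
  imports Complex_Main "HOL-Library.Poly_Mapping"
begin

text \<open>The structure M = Q^{<omega}: finitely supported sequences of rationals.\<close>
type_synonym vec = "nat \<Rightarrow>\<^sub>0 rat"

definition smult :: "rat \<Rightarrow> vec \<Rightarrow> vec" where
  "smult c v = Poly_Mapping.map (\<lambda>x. c * x) v"

definition lincomb :: "(nat \<Rightarrow> rat) \<Rightarrow> vec list \<Rightarrow> vec" where
  "lincomb c vs = (\<Sum>i<length vs. smult (c i) (vs ! i))"

definition vspan :: "vec list \<Rightarrow> vec set" where
  "vspan vs = {lincomb c vs | c. True}"

definition lin_indep :: "vec list \<Rightarrow> bool" where
  "lin_indep vs \<longleftrightarrow> (\<forall>c. lincomb c vs = 0 \<longrightarrow> (\<forall>i<length vs. c i = 0))"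

datatype tm = Var nat | Plus tm tm

datatype fm = Eq tm tm | Neg fm | Conj fm fm | Ex nat fm

fun tval :: "(nat \<Rightarrow> vec) \<Rightarrow> tm \<Rightarrow> vec" where
  "tval e (Var n) = e n"
| "tval e (Plus s t) = tval e s + tval e t"

fun sat :: "(nat \<Rightarrow> vec) \<Rightarrow> fm \<Rightarrow> bool" where
  "sat e (Eq s t) = (tval e s = tval e t)"
| "sat e (Neg f) = (\<not> sat e f)"
| "sat e (Conj f g) = (sat e f \<and> sat e g)"
| "sat e (Ex n f) = (\<exists>v. sat (e(n := v)) f)"

fun tvars :: "tm \<Rightarrow> nat set" where
  "tvars (Var n) = {n}"
| "tvars (Plus s t) = tvars s \<union> tvars t"

fun fv :: "fm \<Rightarrow> nat set" where
  "fv (Eq s t) = tvars s \<union> tvars t"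
| "fv (Neg f) = fv f"
| "fv (Conj f g) = fv f \<union> fv g"
| "fv (Ex n f) = fv f - {n}"

definition env :: "vec list \<Rightarrow> nat \<Rightarrow> vec" where
  "env xs i = (if i < length xs then xs ! i else 0)"

definition definable :: "nat \<Rightarrow> (vec list \<Rightarrow> bool) \<Rightarrow> bool" where
  "definable n P \<longleftrightarrow> (\<exists>\<phi>. fv \<phi> \<subseteq> {..<n} \<and>
      (\<forall>xs. length xs = n \<longrightarrow> (P xs \<longleftrightarrow> sat (env xs) \<phi>)))"

text \<open>Counting quantifier (exists_{>K} y_1,...,y_l) Q(y): iterated, as in the paper.\<close>
fun exists_gt :: "nat \<Rightarrow> nat \<Rightarrow> (vec list \<Rightarrow> bool) \<Rightarrow> bool" where
  "exists_gt K 0 Q = Q []"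
| "exists_gt K (Suc n) Q =
     (\<exists>S. finite S \<and> K < card S \<and> (\<forall>y\<in>S. exists_gt K n (\<lambda>ys. Q (y # ys))))"

end

theory Submission
  imports Defs "HOL-Library.Infinite_Set"
begin

text \<open>
A weak quantifier elimination for \<open>\<langle>\<M>;+\<rangle>\<close>: whether a formula holds under an assignment
depends only on which members of a finite set \<open>E\<close> of rational linear forms vanish on it.
To eliminate \<open>\<exists>x\<^sub>n\<close>, combine pairs of forms so as to cancel \<open>x\<^sub>n\<close>: a witness either
solves some form with nonzero \<open>x\<^sub>n\<close>-coefficient, and is then transported through that
equation, or solves none, and is then replaced by a fresh vector avoiding the finitely
many forbidden values.

If \<open>b\<close> is independent over \<open>\<V>(a)\<close> ("generic"), a form vanishes on \<open>(a, b)\<close> iff its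
\<open>b\<close>-coefficients vanish and its \<open>a\<close>-part vanishes, so all generic \<open>b\<close> behave alike.
Generic tuples can be built coordinatewise from the infinite complement of a span, which
yields \<open>K + 1\<close> choices at every coordinate for any \<open>K\<close>. Conversely, if generic tuples
fail \<open>R\<close>, every solution lies on one of at most \<open>K = |E|\<close> proper affine hyperplanes. Such a
union cannot satisfy \<open>\<exists>\<^sub>>\<^sub>K\<close>: among \<open>K + 1\<close> values of the first coordinate one avoids the at
most \<open>K\<close> values forced by hyperplanes involving only that coordinate, and the slice there is
again such a union in one variable fewer.
\<close>

lemma lookup_smult [simp]: "Poly_Mapping.lookup (smult c v) i = c * Poly_Mapping.lookup v i"
  by (simp add: smult_def map.rep_eq when_def)

lemma smult_0_left [simp]: "smult 0 v = 0"
  by (rule poly_mapping_eqI) simp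

lemma smult_1 [simp]: "smult 1 v = v"
  by (rule poly_mapping_eqI) simp

lemma smult_smult [simp]: "smult a (smult b v) = smult (a * b) v"
  by (rule poly_mapping_eqI) simp

lemma smult_eq_0_iff [simp]: "smult c v = 0 \<longleftrightarrow> c = 0 \<or> v = 0"
  by (auto simp: poly_mapping_eq_iff fun_eq_iff)

lemma smult_minus_left: "smult (- c) v = - smult c v"
  by (rule poly_mapping_eqI) simp

lemma add_smult_eq_0_iff:
  assumes "c \<noteq> 0"
  shows "u + smult c v = 0 \<longleftrightarrow> v = smult (- 1 / c) u"
proof -
  have "Poly_Mapping.lookup u x + c * Poly_Mapping.lookup v x = 0
      \<longleftrightarrow> Poly_Mapping.lookup v x = - 1 / c * Poly_Mapping.lookup u x" for x
    using assms by (auto simp: field_simps)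
  then show ?thesis
    by (simp add: poly_mapping_eq_iff fun_eq_iff lookup_add)
qed

lemma add_smult_eq_0_elim:
  assumes c: "c \<noteq> 0" and u: "u + smult c w = 0"
  shows "u' + smult c' w = 0 \<longleftrightarrow> smult c u' + smult (- c') u = 0"
proof -
  let ?l = "Poly_Mapping.lookup"
  have u0: "?l u x + c * ?l w x = 0" for x
    using u by (metis lookup_add lookup_smult lookup_zero)
  have "c * ?l u' x + (- c') * ?l u x = c * (?l u' x + c' * ?l w x) - c' * (?l u x + c * ?l w x)" for x
    by (simp add: algebra_simps)
  then have "?l u' x + c' * ?l w x = 0 \<longleftrightarrow> c * ?l u' x + (- c') * ?l u x = 0" for x
    using c u0[of x] by simp
  then show ?thesis
    by (simp add: poly_mapping_eq_iff fun_eq_iff lookup_add)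
qed

lemma lookup_lincomb:
  "Poly_Mapping.lookup (lincomb c vs) i = (\<Sum>j<length vs. c j * Poly_Mapping.lookup (vs ! j) i)"
  by (simp add: lincomb_def lookup_sum)

lemma lincomb_Nil [simp]: "lincomb c [] = 0"
  by (simp add: lincomb_def)

lemma lincomb_Cons: "lincomb c (x # xs) = smult (c 0) x + lincomb (\<lambda>i. c (Suc i)) xs"
  by (simp add: lincomb_def sum.lessThan_Suc_shift del: sum.lessThan_Suc)

lemma lincomb_snoc: "lincomb c (xs @ [y]) = lincomb c xs + smult (c (length xs)) y"
  by (simp add: lincomb_def nth_append)

lemma lincomb_append: "lincomb c (xs @ ys) = lincomb c xs + lincomb (\<lambda>j. c (length xs + j)) ys"
  by (induction ys rule: rev_induct) (simp_all add: lincomb_snoc add.assoc flip: append_assoc)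

lemma lincomb_eq_0: "(\<And>i. i < length xs \<Longrightarrow> c i = 0) \<Longrightarrow> lincomb c xs = 0"
  by (simp add: lincomb_def)

lemma lincomb_linear:
  "lincomb (\<lambda>i. a * c i + b * d i) xs = smult a (lincomb c xs) + smult b (lincomb d xs)"
  by (rule poly_mapping_eqI)
    (simp add: lookup_lincomb lookup_add sum_distrib_left sum.distrib algebra_simps)

lemma vspan_iff: "x \<in> vspan xs \<longleftrightarrow> (\<exists>c. x = lincomb c xs)"
  by (auto simp: vspan_def)

lemma zero_in_vspan [simp]: "0 \<in> vspan xs"
  unfolding vspan_iff by (rule exI[of _ "\<lambda>_. 0"]) (simp add: lincomb_eq_0)

lemma vspan_Nil: "vspan [] = {0}"
  by (auto simp: vspan_iff lincomb_def)

lemma vspan_lin: "u \<in> vspan xs \<Longrightarrow> v \<in> vspan xs \<Longrightarrow> smult a u + smult b v \<in> vspan xs"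
  unfolding vspan_iff by (metis lincomb_linear)

lemma vspan_smult: "u \<in> vspan xs \<Longrightarrow> smult a u \<in> vspan xs"
  using vspan_lin[of u xs u a 0] by simp

lemma vspan_uminus: "u \<in> vspan xs \<Longrightarrow> - u \<in> vspan xs"
  using vspan_smult[of u xs "- 1"] by (simp add: smult_minus_left)

lemma vspan_diff: "u \<in> vspan xs \<Longrightarrow> v \<in> vspan xs \<Longrightarrow> u - v \<in> vspan xs"
  using vspan_lin[of u xs "- v" 1 1] vspan_uminus[of v xs] by simp

lemma vspan_Cons: "x \<in> vspan (y # xs) \<longleftrightarrow> (\<exists>t u. u \<in> vspan xs \<and> x = smult t y + u)"
proof
  assume "\<exists>t u. u \<in> vspan xs \<and> x = smult t y + u"
  then obtain t c where "x = smult t y + lincomb c xs"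
    by (auto simp: vspan_iff)
  then have "x = lincomb (case_nat t c) (y # xs)"
    by (simp add: lincomb_Cons)
  then show "x \<in> vspan (y # xs)"
    by (auto simp: vspan_iff)
qed (auto simp: vspan_iff lincomb_Cons)

lemma vspan_snoc_mono: "x \<in> vspan xs \<Longrightarrow> x \<in> vspan (xs @ [y])"
proof -
  assume "x \<in> vspan xs"
  then obtain c where "x = lincomb c xs"
    by (auto simp: vspan_iff)
  then have "x = lincomb (c(length xs := 0)) (xs @ [y])"
    by (simp add: lincomb_snoc lincomb_def nth_append)
  then show ?thesis
    by (auto simp: vspan_iff)
qed

lemma vspan_snoc_last: "y \<in> vspan (xs @ [y])"
proof -
  have "y = lincomb ((\<lambda>_. 0)(length xs := 1)) (xs @ [y])"
    by (simp add: lincomb_snoc lincomb_def nth_append)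
  then show ?thesis
    by (auto simp: vspan_iff)
qed

lemma ex_vspan_support_bound: "\<exists>m. \<forall>x\<in>vspan a. \<forall>i\<ge>m. Poly_Mapping.lookup x i = 0"
proof -
  have "finite (\<Union>v\<in>set a. Poly_Mapping.keys v)"
    by simp
  then obtain m where m: "(\<Union>v\<in>set a. Poly_Mapping.keys v) \<subseteq> {..<m}"
    using finite_nat_iff_bounded by blast
  then have "Poly_Mapping.lookup v i = 0" if "v \<in> set a" "i \<ge> m" for v i
    using that by (metis UN_I in_keys_iff lessThan_iff not_le subsetD)
  then have "Poly_Mapping.lookup x i = 0" if "x \<in> vspan a" "i \<ge> m" for x i
    using that by (auto simp: vspan_iff lookup_lincomb)
  then show ?thesis
    by blast
qed

lemma infinite_compl_vspan: "infinite (- vspan a)"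
proof -
  obtain m where m: "\<forall>x\<in>vspan a. \<forall>i\<ge>m. Poly_Mapping.lookup x i = 0"
    using ex_vspan_support_bound by blast
  let ?f = "\<lambda>i. Poly_Mapping.single (m + i) (1::rat)"
  have "inj ?f"
  proof (rule injI)
    fix i j assume "?f i = ?f j"
    then have "Poly_Mapping.lookup (?f i) (m + i) = Poly_Mapping.lookup (?f j) (m + i)"
      by simp
    then show "i = j"
      by (cases "i = j") (auto simp: lookup_single_not_eq)
  qed
  then have "infinite (range ?f)"
    by (simp add: finite_image_iff)
  moreover have "?f i \<notin> vspan a" for i
  proof -
    have "Poly_Mapping.lookup (?f i) (m + i) \<noteq> 0"
      by simp
    then show ?thesis
      using m le_add1 by blast
  qed
  ultimately show ?thesis
    using infinite_super by (metis ComplI image_subsetI)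
qed


definition generic :: "vec list \<Rightarrow> vec list \<Rightarrow> bool" where
  "generic a b \<longleftrightarrow> lin_indep b \<and> vspan a \<inter> vspan b = {0}"

lemma generic_Nil: "generic a []"
  by (auto simp: generic_def lin_indep_def vspan_Nil)

lemma generic_Cons:
  assumes y: "y \<notin> vspan a" and b: "generic (a @ [y]) b"
  shows "generic a (y # b)"
proof -
  have inb: "w = 0" if "w \<in> vspan b" "w \<in> vspan (a @ [y])" for w
    using b that by (auto simp: generic_def)
  have "lin_indep (y # b)"
    unfolding lin_indep_def
  proof (rule allI, rule impI)
    fix c assume "lincomb c (y # b) = 0"
    then have e: "lincomb (\<lambda>i. c (Suc i)) b = smult (- c 0) y"
      by (simp add: lincomb_Cons smult_minus_left eq_neg_iff_add_eq_0 add.commute)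
    then have "lincomb (\<lambda>i. c (Suc i)) b = 0"
      by (metis inb vspan_iff vspan_smult vspan_snoc_last)
    then have "\<forall>i<length b. c (Suc i) = 0" and "c 0 = 0"
      using b e y by (auto simp: generic_def lin_indep_def)
    then show "\<forall>i<length (y # b). c i = 0"
      by (metis length_Cons less_Suc_eq_0_disj)
  qed
  moreover have "x = 0" if x: "x \<in> vspan a" "x \<in> vspan (y # b)" for x
  proof -
    obtain t u where u: "u \<in> vspan b" and xe: "x = smult t y + u"
      using x(2) by (auto simp: vspan_Cons)
    have "u = x - smult t y"
      using xe by simp
    also have "\<dots> \<in> vspan (a @ [y])"
      by (intro vspan_diff vspan_snoc_mono vspan_smult vspan_snoc_last x(1))
    finally have "x = smult t y"
      using inb u xe by simp
    moreover have "t = 0"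
      using y x(1) vspan_smult[of x a "1 / t"] \<open>x = smult t y\<close> by (cases "t = 0") auto
    ultimately show ?thesis
      by simp
  qed
  ultimately show ?thesis
    by (auto simp: generic_def)
qed

lemma lincomb_append_generic_eq_0:
  assumes "generic a b"
  shows "lincomb L (a @ b) = 0 \<longleftrightarrow> lincomb L a = 0 \<and> (\<forall>j<length b. L (length a + j) = 0)"
proof
  let ?A = "lincomb L a" and ?B = "lincomb (\<lambda>j. L (length a + j)) b"
  assume "lincomb L (a @ b) = 0"
  then have AB: "?A = - ?B"
    by (simp add: lincomb_append eq_neg_iff_add_eq_0)
  then have "?A \<in> vspan a \<inter> vspan b"
    by (metis IntI vspan_iff vspan_uminus)
  then have "?A = 0"
    using assms by (auto simp: generic_def)
  moreover have "\<forall>j<length b. L (length a + j) = 0"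
    using assms AB \<open>?A = 0\<close> by (auto simp: generic_def lin_indep_def)
  ultimately show "?A = 0 \<and> (\<forall>j<length b. L (length a + j) = 0)" ..
qed (simp add: lincomb_append lincomb_eq_0)

lemma ex_generic: "\<exists>b. length b = n \<and> generic a b"
proof (induction n arbitrary: a)
  case 0
  show ?case
    using generic_Nil by auto
next
  case (Suc n)
  have "- vspan a \<noteq> {}"
    using infinite_compl_vspan[of a] by (metis finite.emptyI)
  then obtain y where y: "y \<notin> vspan a"
    by blast
  obtain b where "length b = n" "generic (a @ [y]) b"
    using Suc by blast
  then show ?case
    using generic_Cons[OF y] by (metis length_Cons)
qed

lemma exists_gt_mono:
  "(\<And>ys. length ys = n \<Longrightarrow> Q ys \<Longrightarrow> Q' ys) \<Longrightarrow> exists_gt K n Q \<Longrightarrow> exists_gt K n Q'"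
proof (induction n arbitrary: Q Q')
  case (Suc n)
  then show ?case
    by (simp (no_asm_use)) (metis (no_types, lifting) length_Cons)
qed simp

lemma exists_gt_if_all_generic:
  "(\<And>b. length b = n \<Longrightarrow> generic a b \<Longrightarrow> Q b) \<Longrightarrow> exists_gt K n Q"
proof (induction n arbitrary: a Q)
  case 0
  then show ?case
    using generic_Nil by simp
next
  case (Suc n)
  obtain S where S: "S \<subseteq> - vspan a" "finite S" "card S = Suc K"
    using infinite_arbitrarily_large[OF infinite_compl_vspan] by blast
  have "exists_gt K n (\<lambda>ys. Q (y # ys))" if "y \<in> S" for y
    using S that by (intro Suc.IH[of "a @ [y]"] Suc.prems) (auto intro: generic_Cons)
  then show ?case
    using S by auto
qed


definition lin_form :: "nat \<Rightarrow> (nat \<Rightarrow> rat) \<Rightarrow> (nat \<Rightarrow> vec) \<Rightarrow> vec" where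
  "lin_form M L e = (\<Sum>i<M. smult (L i) (e i))"

text \<open>Unlike \<^const>\<open>fv\<close>, this includes bound variables: they too must index coordinates
  of the linear forms.\<close>
fun vars :: "fm \<Rightarrow> nat set" where
  "vars (Eq s t) = tvars s \<union> tvars t"
| "vars (Neg f) = vars f"
| "vars (Conj f g) = vars f \<union> vars g"
| "vars (Ex n f) = insert n (vars f)"

fun tm_coeff :: "tm \<Rightarrow> nat \<Rightarrow> rat" where
  "tm_coeff (Var m) i = (if i = m then 1 else 0)"
| "tm_coeff (Plus s t) i = tm_coeff s i + tm_coeff t i"

lemma finite_tvars: "finite (tvars s)"
  by (induction s) auto

lemma finite_vars: "finite (vars \<phi>)"
  by (induction \<phi>) (auto simp: finite_tvars)

lemma lookup_lin_form:
  "Poly_Mapping.lookup (lin_form M L e) x = (\<Sum>i<M. L i * Poly_Mapping.lookup (e i) x)"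
  by (simp add: lin_form_def lookup_sum)

lemma lin_form_linear:
  "lin_form M (\<lambda>i. a * L i + b * L' i) e = smult a (lin_form M L e) + smult b (lin_form M L' e)"
  by (rule poly_mapping_eqI)
    (simp add: lookup_lin_form lookup_add sum_distrib_left sum.distrib algebra_simps)

lemma lin_form_fun_upd:
  assumes "n < M"
  shows "lin_form M L (e(n := v)) = lin_form M (L(n := 0)) e + smult (L n) v"
proof (rule poly_mapping_eqI)
  fix x
  have "(\<Sum>i<M. L i * Poly_Mapping.lookup ((e(n := v)) i) x)
      = (\<Sum>i<M. (L(n := 0)) i * Poly_Mapping.lookup (e i) x
                + (if i = n then L n * Poly_Mapping.lookup v x else 0))"
    by (rule sum.cong) auto
  with assms show "Poly_Mapping.lookup (lin_form M L (e(n := v))) x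
      = Poly_Mapping.lookup (lin_form M (L(n := 0)) e + smult (L n) v) x"
    by (simp add: lookup_lin_form lookup_add sum.distrib)
qed

lemma tval_eq_lin_form: "tvars s \<subseteq> {..<M} \<Longrightarrow> tval e s = lin_form M (tm_coeff s) e"
proof (induction s)
  case (Var m)
  show ?case
  proof (rule poly_mapping_eqI)
    fix x
    have "(\<Sum>i<M. tm_coeff (Var m) i * Poly_Mapping.lookup (e i) x)
        = (\<Sum>i<M. if i = m then Poly_Mapping.lookup (e i) x else 0)"
      by (rule sum.cong) auto
    with Var show "Poly_Mapping.lookup (tval e (Var m)) x = Poly_Mapping.lookup (lin_form M (tm_coeff (Var m)) e) x"
      by (simp add: lookup_lin_form)
  qed
next
  case (Plus s t)
  have "tm_coeff (Plus s t) = (\<lambda>i. 1 * tm_coeff s i + 1 * tm_coeff t i)"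
    by auto
  with Plus show ?case
    by (simp only: lin_form_linear smult_1 tval.simps tvars.simps Un_subset_iff)
qed

definition same_zeros :: "nat \<Rightarrow> (nat \<Rightarrow> rat) set \<Rightarrow> (nat \<Rightarrow> vec) \<Rightarrow> (nat \<Rightarrow> vec) \<Rightarrow> bool" where
  "same_zeros M E e e' \<longleftrightarrow> (\<forall>L\<in>E. lin_form M L e = 0 \<longleftrightarrow> lin_form M L e' = 0)"

lemma same_zeros_sym: "same_zeros M E e e' \<Longrightarrow> same_zeros M E e' e"
  by (auto simp: same_zeros_def)

definition elim_form :: "nat \<Rightarrow> (nat \<Rightarrow> rat) \<Rightarrow> (nat \<Rightarrow> rat) \<Rightarrow> nat \<Rightarrow> rat" where
  "elim_form n L1 L2 i = L1 n * (L2(n := 0)) i + (- L2 n) * (L1(n := 0)) i"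

definition elim_forms :: "nat \<Rightarrow> (nat \<Rightarrow> rat) set \<Rightarrow> (nat \<Rightarrow> rat) set" where
  "elim_forms n E = (\<lambda>L. L(n := 0)) ` E \<union> (\<lambda>(L1, L2). elim_form n L1 L2) ` (E \<times> E)"

lemma finite_elim_forms: "finite E \<Longrightarrow> finite (elim_forms n E)"
  by (simp add: elim_forms_def)

lemma lin_form_elim_form:
  "lin_form M (elim_form n L1 L2) e
     = smult (L1 n) (lin_form M (L2(n := 0)) e) + smult (- L2 n) (lin_form M (L1(n := 0)) e)"
  unfolding elim_form_def[abs_def] by (rule lin_form_linear)

lemma same_zeros_fun_upd_pivot:
  assumes n: "n < M" and L1: "L1 \<in> E" "L1 n \<noteq> 0" and v: "lin_form M L1 (e(n := v)) = 0"
    and ag: "same_zeros M (elim_forms n E) e e'"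
  shows "same_zeros M E (e(n := v)) (e'(n := smult (- 1 / L1 n) (lin_form M (L1(n := 0)) e')))"
    (is "same_zeros M E _ (e'(n := ?v'))")
proof -
  have h: "lin_form M (L1(n := 0)) e + smult (L1 n) v = 0"
    using v lin_form_fun_upd[OF n] by simp
  have h': "lin_form M (L1(n := 0)) e' + smult (L1 n) ?v' = 0"
    unfolding add_smult_eq_0_iff[OF L1(2)] by (rule refl)
  show ?thesis
    unfolding same_zeros_def
  proof
    fix L2 assume L2: "L2 \<in> E"
    have "lin_form M L2 (e(n := v)) = 0 \<longleftrightarrow> lin_form M (elim_form n L1 L2) e = 0"
      unfolding lin_form_fun_upd[OF n] lin_form_elim_form by (rule add_smult_eq_0_elim[OF L1(2) h])
    also have "\<dots> \<longleftrightarrow> lin_form M (elim_form n L1 L2) e' = 0"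
      using ag L1(1) L2 by (auto simp: same_zeros_def elim_forms_def)
    also have "\<dots> \<longleftrightarrow> lin_form M L2 (e'(n := ?v')) = 0"
      unfolding lin_form_fun_upd[OF n] lin_form_elim_form by (rule add_smult_eq_0_elim[OF L1(2) h', symmetric])
    finally show "lin_form M L2 (e(n := v)) = 0 \<longleftrightarrow> lin_form M L2 (e'(n := ?v')) = 0" .
  qed
qed

lemma same_zeros_fun_upd_fresh:
  assumes n: "n < M" and v: "\<forall>L\<in>E. L n \<noteq> 0 \<longrightarrow> lin_form M L (e(n := v)) \<noteq> 0"
    and v': "v' \<notin> (\<lambda>L. smult (- 1 / L n) (lin_form M (L(n := 0)) e')) ` E"
    and ag: "same_zeros M (elim_forms n E) e e'"
  shows "same_zeros M E (e(n := v)) (e'(n := v'))"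
  unfolding same_zeros_def
proof
  fix L assume L: "L \<in> E"
  show "lin_form M L (e(n := v)) = 0 \<longleftrightarrow> lin_form M L (e'(n := v')) = 0"
  proof (cases "L n = 0")
    case True
    then show ?thesis
      using ag L by (simp add: lin_form_fun_upd[OF n] same_zeros_def elim_forms_def)
  next
    case False
    have "lin_form M L (e(n := v)) \<noteq> 0"
      using v L False by blast
    moreover have "lin_form M L (e'(n := v')) \<noteq> 0"
      unfolding lin_form_fun_upd[OF n] add_smult_eq_0_iff[OF False] using v' L by blast
    ultimately show ?thesis
      by simp
  qed
qed

lemma same_zeros_fun_upd:
  assumes "finite E" "n < M" "same_zeros M (elim_forms n E) e e'"
  obtains v' where "same_zeros M E (e(n := v)) (e'(n := v'))"
proof (cases "\<exists>L\<in>E. L n \<noteq> 0 \<and> lin_form M L (e(n := v)) = 0")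
  case True
  then obtain L where L: "L \<in> E" "L n \<noteq> 0" "lin_form M L (e(n := v)) = 0"
    by blast
  show ?thesis
    by (rule that, rule same_zeros_fun_upd_pivot[OF assms(2) L assms(3)])
next
  case False
  have "infinite (UNIV :: vec set)"
    by (rule infinite_super[OF subset_UNIV infinite_compl_vspan])
  then obtain v' where "v' \<notin> (\<lambda>L. smult (- 1 / L n) (lin_form M (L(n := 0)) e')) ` E"
    using ex_new_if_finite assms(1) by blast
  then show ?thesis
    using False by (intro that same_zeros_fun_upd_fresh[OF assms(2) _ _ assms(3)]) auto
qed

lemma sat_same_zeros:
  "vars \<phi> \<subseteq> {..<M} \<Longrightarrow> \<exists>E. finite E \<and> (\<forall>e e'. same_zeros M E e e' \<longrightarrow> sat e \<phi> = sat e' \<phi>)"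
proof (induction \<phi>)
  case (Eq s t)
  let ?L = "\<lambda>i. 1 * tm_coeff s i + (- 1) * tm_coeff t i"
  have "lin_form M ?L e = tval e s - tval e t" for e
    using Eq tval_eq_lin_form[of s M e] tval_eq_lin_form[of t M e]
    unfolding lin_form_linear smult_minus_left smult_1 by simp
  then show ?case
    by (intro exI[of _ "{?L}"]) (auto simp: same_zeros_def)
next
  case (Conj f g)
  then obtain E1 E2 where "finite E1" "\<forall>e e'. same_zeros M E1 e e' \<longrightarrow> sat e f = sat e' f"
    and "finite E2" "\<forall>e e'. same_zeros M E2 e e' \<longrightarrow> sat e g = sat e' g"
    by auto
  moreover have "same_zeros M E1 e e' \<and> same_zeros M E2 e e'"
    if "same_zeros M (E1 \<union> E2) e e'" for e e'
    using that by (auto simp: same_zeros_def)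
  ultimately show ?case
    by (intro exI[of _ "E1 \<union> E2"]) (simp, blast)
next
  case (Ex n f)
  then obtain E where E: "finite E" "\<And>e e'. same_zeros M E e e' \<Longrightarrow> sat e f = sat e' f"
    and n: "n < M"
    by auto
  have "sat e' (Ex n f)" if "same_zeros M (elim_forms n E) e e'" "sat e (Ex n f)" for e e'
    using that same_zeros_fun_upd[OF E(1) n] E(2) by (metis sat.simps(4))
  then show ?case
    using E(1) by (intro exI[of _ "elim_forms n E"]) (metis finite_elim_forms same_zeros_sym)
qed auto


lemma affine_cover_slice:
  assumes F: "finite F" "\<forall>(c, L)\<in>F. \<exists>j<Suc n. L j \<noteq> 0"
    and y: "y \<notin> (\<lambda>(c, L). smult (- 1 / L 0) c) ` F"
  obtains F' where "finite F'" "card F' \<le> card F" "\<forall>(c, L)\<in>F'. \<exists>j<n. L j \<noteq> 0"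
    and "\<And>ys. length ys = n \<Longrightarrow> \<exists>(c, L)\<in>F. c + lincomb L (y # ys) = 0
           \<Longrightarrow> \<exists>(c, L)\<in>F'. c + lincomb L ys = 0"
proof
  let ?F0 = "{(c, L)\<in>F. \<exists>j<n. L (Suc j) \<noteq> 0}"
  define F' where "F' = (\<lambda>(c, L). (c + smult (L 0) y, \<lambda>j. L (Suc j))) ` ?F0"
  have F0: "?F0 \<subseteq> F"
    by auto
  then have "finite ?F0"
    using F(1) finite_subset by blast
  then show "finite F'"
    by (simp add: F'_def)
  have "card F' \<le> card ?F0"
    unfolding F'_def using \<open>finite ?F0\<close> by (rule card_image_le)
  also have "\<dots> \<le> card F"
    using F(1) F0 by (rule card_mono)
  finally show "card F' \<le> card F" .
  show "\<forall>(c, L)\<in>F'. \<exists>j<n. L j \<noteq> 0"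
    by (auto simp: F'_def)
  fix ys :: "vec list"
  assume len: "length ys = n" and "\<exists>(c, L)\<in>F. c + lincomb L (y # ys) = 0"
  then obtain c L where cL: "(c, L) \<in> F" and "c + lincomb L (y # ys) = 0"
    by blast
  then have e: "(c + smult (L 0) y) + lincomb (\<lambda>i. L (Suc i)) ys = 0"
    by (simp add: lincomb_Cons add.assoc)
  show "\<exists>(c, L)\<in>F'. c + lincomb L ys = 0"
  proof (cases "\<exists>j<n. L (Suc j) \<noteq> 0")
    case True
    then have "(c + smult (L 0) y, \<lambda>j. L (Suc j)) \<in> F'"
      unfolding F'_def using cL by (intro image_eqI[where x = "(c, L)"]) auto
    then show ?thesis
      using e by (intro bexI) simp_all
  next
    case False
    then have "c + smult (L 0) y = 0"
      using e len by (simp add: lincomb_eq_0)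
    moreover obtain j where "j < Suc n" "L j \<noteq> 0"
      using F(2) cL by blast
    then have "L 0 \<noteq> 0"
      using False by (cases j) auto
    ultimately have "y = smult (- 1 / L 0) c"
      by (simp add: add_smult_eq_0_iff)
    then have "y \<in> (\<lambda>(c, L). smult (- 1 / L 0) c) ` F"
      using cL by (intro image_eqI[where x = "(c, L)"]) auto
    with y show ?thesis
      by blast
  qed
qed

lemma not_exists_gt_affine_cover:
  "finite F \<Longrightarrow> card F \<le> K \<Longrightarrow> \<forall>(c, L)\<in>F. \<exists>j<n. L j \<noteq> 0
    \<Longrightarrow> \<not> exists_gt K n (\<lambda>ys. \<exists>(c, L)\<in>F. c + lincomb L ys = 0)"
proof (induction n arbitrary: F)
  case 0
  then show ?case
    by auto
next
  case (Suc n)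
  show ?case
  proof
    assume "exists_gt K (Suc n) (\<lambda>ys. \<exists>(c, L)\<in>F. c + lincomb L ys = 0)"
    then obtain S where S: "finite S" "K < card S"
      "\<forall>y\<in>S. exists_gt K n (\<lambda>ys. \<exists>(c, L)\<in>F. c + lincomb L (y # ys) = 0)"
      by auto
    let ?forced_fun = "\<lambda>(c, L). smult (- 1 / L 0) c"
    let ?forced = "?forced_fun ` F"
    have "card ?forced \<le> K"
      using card_image_le[OF Suc.prems(1)] Suc.prems(2) by (rule le_trans)
    then have "\<not> S \<subseteq> ?forced"
      using S(2) card_mono[OF finite_imageI[OF Suc.prems(1)], of S ?forced_fun] by linarith
    then obtain y where y: "y \<in> S" "y \<notin> ?forced"
      by blast
    obtain F' where F': "finite F'" "card F' \<le> card F" "\<forall>(c, L)\<in>F'. \<exists>j<n. L j \<noteq> 0"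
      and cover: "\<And>ys. length ys = n \<Longrightarrow> \<exists>(c, L)\<in>F. c + lincomb L (y # ys) = 0
                   \<Longrightarrow> \<exists>(c, L)\<in>F'. c + lincomb L ys = 0"
      using affine_cover_slice[OF Suc.prems(1,3) y(2)] by blast
    have "exists_gt K n (\<lambda>ys. \<exists>(c, L)\<in>F'. c + lincomb L ys = 0)"
      by (rule exists_gt_mono[OF cover S(3)[rule_format, OF y(1)]])
    moreover have "card F' \<le> K"
      using F'(2) Suc.prems(2) by (rule le_trans)
    ultimately show False
      using Suc.IH[OF F'(1) _ F'(3)] by blast
  qed
qed


lemma lin_form_env: "length xs \<le> M \<Longrightarrow> lin_form M L (env xs) = lincomb L xs"
  unfolding lin_form_def lincomb_def
  by (rule sum.mono_neutral_cong_right) (auto simp: env_def)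

lemma sat_env_generic_eq:
  assumes E: "\<And>e e'. same_zeros M E e e' \<Longrightarrow> sat e \<phi> = sat e' \<phi>"
    and M: "length (a @ b) \<le> M" and len: "length b' = length b"
    and "generic a b" "generic a b'"
  shows "sat (env (a @ b)) \<phi> = sat (env (a @ b')) \<phi>"
proof (rule E)
  have "length (a @ b') \<le> M"
    using M len by simp
  then show "same_zeros M E (env (a @ b)) (env (a @ b'))"
    using M len assms(4,5) by (simp add: same_zeros_def lin_form_env lincomb_append_generic_eq_0)
qed

lemma generic_fails_solution_on_hyperplane:
  assumes E: "\<And>e e'. same_zeros M E e e' \<Longrightarrow> sat e \<phi> = sat e' \<phi>"
    and M: "length (a @ g) \<le> M" and g: "generic a g" "\<not> sat (env (a @ g)) \<phi>"
    and ys: "length ys = length g" "sat (env (a @ ys)) \<phi>"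
  obtains L where "L \<in> E" "\<exists>j<length g. L (length a + j) \<noteq> 0"
    and "lincomb L a + lincomb (\<lambda>j. L (length a + j)) ys = 0"
proof -
  let ?k = "length a" and ?l = "length g"
  have "\<not> same_zeros M E (env (a @ ys)) (env (a @ g))"
    using E g(2) ys(2) by blast
  then obtain L where L: "L \<in> E"
    and "(lincomb L (a @ ys) = 0) \<noteq> (lincomb L (a @ g) = 0)"
    using M ys(1) by (auto simp: same_zeros_def lin_form_env)
  then have dif: "(lincomb L a + lincomb (\<lambda>j. L (?k + j)) ys = 0) \<noteq>
      (lincomb L a = 0 \<and> (\<forall>j<?l. L (?k + j) = 0))"
    by (simp only: lincomb_append_generic_eq_0[OF g(1), symmetric] lincomb_append[symmetric]
        simp_thms)
  have nz: "\<exists>j<?l. L (?k + j) \<noteq> 0"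
  proof (rule ccontr)
    assume zero: "\<not> ?thesis"
    then have "lincomb (\<lambda>j. L (?k + j)) ys = 0"
      using ys(1) by (simp add: lincomb_eq_0)
    with dif zero show False
      by simp
  qed
  with dif have "lincomb L a + lincomb (\<lambda>j. L (?k + j)) ys = 0"
    by blast
  with L nz show thesis
    by (rule that)
qed

lemma not_exists_gt_if_generic_fails:
  assumes "finite E" and E: "\<And>e e'. same_zeros M E e e' \<Longrightarrow> sat e \<phi> = sat e' \<phi>"
    and M: "length (a @ g) \<le> M" and g: "generic a g" "\<not> sat (env (a @ g)) \<phi>"
  shows "\<not> exists_gt (card E) (length g) (\<lambda>ys. sat (env (a @ ys)) \<phi>)"
proof
  let ?k = "length a" and ?l = "length g"
  let ?E0 = "{L\<in>E. \<exists>j<?l. L (?k + j) \<noteq> 0}"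
  define F where "F = (\<lambda>L. (lincomb L a, \<lambda>j. L (?k + j))) ` ?E0"
  have "finite F"
    using \<open>finite E\<close> by (simp add: F_def)
  have "card F \<le> card ?E0"
    unfolding F_def using \<open>finite E\<close> by (intro card_image_le) simp
  also have "\<dots> \<le> card E"
    using \<open>finite E\<close> by (intro card_mono) auto
  finally have "card F \<le> card E" .
  moreover have "\<forall>(c, L)\<in>F. \<exists>j<?l. L j \<noteq> 0"
    by (auto simp: F_def)
  moreover assume ex: "exists_gt (card E) ?l (\<lambda>ys. sat (env (a @ ys)) \<phi>)"
  have "\<exists>(c, L)\<in>F. c + lincomb L ys = 0"
    if ys: "length ys = ?l" "sat (env (a @ ys)) \<phi>" for ys
  proof -
    obtain L where L: "L \<in> E" "\<exists>j<?l. L (?k + j) \<noteq> 0"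
      and "lincomb L a + lincomb (\<lambda>j. L (?k + j)) ys = 0"
      by (rule generic_fails_solution_on_hyperplane[OF E M g ys])
    moreover have "(lincomb L a, \<lambda>j. L (?k + j)) \<in> F"
      unfolding F_def using L by blast
    ultimately show ?thesis
      by (intro bexI) simp_all
  qed
  then have "exists_gt (card E) ?l (\<lambda>ys. \<exists>(c, L)\<in>F. c + lincomb L ys = 0)"
    by (rule exists_gt_mono[OF _ ex])
  ultimately show False
    using not_exists_gt_affine_cover[OF \<open>finite F\<close>] by blast
qed

theorem mainTheorem2:
  fixes R :: "vec list \<Rightarrow> vec list \<Rightarrow> bool" and k l :: nat
  assumes "definable (k + l) (\<lambda>zs. R (take k zs) (drop k zs))"
  shows "\<exists>K::nat. \<forall>a. length a = k \<longrightarrow>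
    (((\<exists>b. length b = l \<and> lin_indep b \<and> vspan a \<inter> vspan b = {0} \<and> R a b) \<longleftrightarrow>
      (\<forall>b. length b = l \<and> lin_indep b \<and> vspan a \<inter> vspan b = {0} \<longrightarrow> R a b)) \<and>
     ((\<forall>b. length b = l \<and> lin_indep b \<and> vspan a \<inter> vspan b = {0} \<longrightarrow> R a b) \<longleftrightarrow>
      exists_gt K l (R a)))"
proof -
  obtain \<phi> where R_sat: "\<And>zs. length zs = k + l \<Longrightarrow> R (take k zs) (drop k zs) = sat (env zs) \<phi>"
    using assms unfolding definable_def by blast
  obtain M0 where "vars \<phi> \<subseteq> {..<M0}"
    using finite_vars finite_nat_iff_bounded by blast
  define M where "M = M0 + (k + l)"
  have M: "vars \<phi> \<subseteq> {..<M}" "k + l \<le> M"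
    using \<open>vars \<phi> \<subseteq> {..<M0}\<close> by (auto simp: M_def)
  obtain E where "finite E" and E: "\<And>e e'. same_zeros M E e e' \<Longrightarrow> sat e \<phi> = sat e' \<phi>"
    using sat_same_zeros[OF M(1)] by blast
  have "((\<exists>b. length b = l \<and> generic a b \<and> R a b) \<longleftrightarrow> (\<forall>b. length b = l \<and> generic a b \<longrightarrow> R a b))
      \<and> ((\<forall>b. length b = l \<and> generic a b \<longrightarrow> R a b) \<longleftrightarrow> exists_gt (card E) l (R a))"
    if a: "length a = k" for a
  proof -
    obtain g where g: "length g = l" "generic a g"
      using ex_generic by blast
    have R: "R a b = sat (env (a @ b)) \<phi>" if "length b = l" for b
      using R_sat[of "a @ b"] a that by simp
    have same: "R a b = R a g" if "length b = l" "generic a b" for b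
      using R sat_env_generic_eq[OF E _ _ that(2) g(2)] that(1) g(1) a M(2) by simp
    have "R a g" if ex: "exists_gt (card E) l (R a)"
    proof (rule ccontr)
      assume "\<not> R a g"
      then have "\<not> exists_gt (card E) l (\<lambda>ys. sat (env (a @ ys)) \<phi>)"
        using not_exists_gt_if_generic_fails[OF \<open>finite E\<close> E _ g(2)] R g(1) a M(2) by simp
      moreover have "exists_gt (card E) l (\<lambda>ys. sat (env (a @ ys)) \<phi>)"
        using ex by (rule exists_gt_mono[rotated]) (simp add: R)
      ultimately show False
        by blast
    qed
    then show ?thesis
      using same g exists_gt_if_all_generic[of l a "R a"] by blast
  qed
  then show ?thesis
    unfolding generic_def conj_assoc by (intro exI[of _ "card E"] allI impI)
qed

end
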